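(* Let $\omega$ be a Bergman weight on the open unit disc $\mathbb{D}$. Let $k,\ell\in\mathbb{N}\cup\{0\}$ and let $\mathfrak{p}=(p_1,\dots,p_\ell)\in\mathbb{D}^\ell$, $\mathfrak{q}=(q_1,\dots,q_k)\in\mathbb{D}^k$ be tuples of distinct points. Then $$\mathscr{B}_\omega(\mathfrak{p})=\prod_{j=1}^\ell\frac{z-p_j}{1-\bar p_jz}\Big(\prod_{j=1}^k\frac{z-q_j}{1-\bar q_jz}\Big)^{-1}\cdot\mathscr{B}_\omega(\mathfrak{q}).$$ In particular $\mathscr{B}_\omega(\mathfrak{p})=\prod_{j=1}^\ell\frac{z-p_j}{1-\bar p_jz}\cdot\mathscr{B}_\omega$.
   Context: A Bergman weight $\omega:\mathbb{D}\to\mathbb{R}^+$ is Lebesgue integrable and such that $\mathscr{B}_\omega=L^2(\mathbb{D},\omega\,d\lambda)\cap\mathscr{O}(\mathbb{D})$ is closed in $L^2(\mathbb{D},\omega d\lambda)$ and evaluation functionals are uniformly bounded on compact subsets. For a tuple $\mathfrak{p}$ of distinct points, $\mathscr{B}_\omega(\mathfrak{p})=\{\varphi\in\mathscr{B}_\omega:\varphi(p_1)=\dots=\varphi(p_\ell)=0\}$ (for the empty tuple this is $\mathscr{B}_\omega$). A function times a space denotes the set of products, with removable singularities filled in. *)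

theory Defs
  imports "HOL-Analysis.Analysis"
begin

abbreviation udisc :: "complex set" where "udisc \<equiv> ball 0 1"

definition wsq :: "(complex \<Rightarrow> real) \<Rightarrow> (complex \<Rightarrow> complex) \<Rightarrow> real" where
  "wsq \<omega> f = set_lebesgue_integral lebesgue udisc (\<lambda>z. (cmod (f z))\<^sup>2 * \<omega> z)"

definition wnorm :: "(complex \<Rightarrow> real) \<Rightarrow> (complex \<Rightarrow> complex) \<Rightarrow> real" where
  "wnorm \<omega> f = sqrt (wsq \<omega> f)"

definition wL2 :: "(complex \<Rightarrow> real) \<Rightarrow> (complex \<Rightarrow> complex) \<Rightarrow> bool" where
  "wL2 \<omega> f \<longleftrightarrow> f \<in> borel_measurable lebesgue \<and>
     set_integrable lebesgue udisc (\<lambda>z. (cmod (f z))\<^sup>2 * \<omega> z)"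

definition bergman :: "(complex \<Rightarrow> real) \<Rightarrow> (complex \<Rightarrow> complex) set" where
  "bergman \<omega> = {f. f holomorphic_on udisc \<and> (\<forall>z. z \<notin> udisc \<longrightarrow> f z = 0) \<and> wL2 \<omega> f}"

definition bergman_weight :: "(complex \<Rightarrow> real) \<Rightarrow> bool" where
  "bergman_weight \<omega> \<longleftrightarrow>
     (\<forall>z\<in>udisc. \<omega> z > 0) \<and>
     set_integrable lebesgue udisc \<omega> \<and>
     \<comment> \<open>closedness of the Bergman space in L2(D, omega)\<close>
     (\<forall>fs g. (\<forall>n. fs n \<in> bergman \<omega>) \<longrightarrow> wL2 \<omega> g \<longrightarrow>
        (\<lambda>n. wsq \<omega> (\<lambda>z. fs n z - g z)) \<longlonglongrightarrow> 0 \<longrightarrow>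
        (\<exists>h\<in>bergman \<omega>. AE z in lebesgue. z \<in> udisc \<longrightarrow> g z = h z)) \<and>
     \<comment> \<open>point evaluations uniformly bounded on compact subsets\<close>
     (\<forall>K. compact K \<longrightarrow> K \<subseteq> udisc \<longrightarrow>
        (\<exists>C. \<forall>f\<in>bergman \<omega>. \<forall>z\<in>K. cmod (f z) \<le> C * wnorm \<omega> f))"

definition bergman_zeros :: "(complex \<Rightarrow> real) \<Rightarrow> complex list \<Rightarrow> (complex \<Rightarrow> complex) set" where
  "bergman_zeros \<omega> ps = {f \<in> bergman \<omega>. \<forall>p\<in>set ps. f p = 0}"

definition blaschke :: "complex list \<Rightarrow> complex \<Rightarrow> complex" where
  "blaschke ps z = prod_list (map (\<lambda>p. (z - p) / (1 - cnj p * z)) ps)"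

text \<open>Product of a function with a set of functions, with removable singularities
  filled in: the holomorphic functions on the disc (vanishing off it) that agree with
  g * phi off a finite set, for some phi in S.\<close>
definition fun_times :: "(complex \<Rightarrow> complex) \<Rightarrow> (complex \<Rightarrow> complex) set \<Rightarrow> (complex \<Rightarrow> complex) set" where
  "fun_times g S = {h. h holomorphic_on udisc \<and> (\<forall>z. z \<notin> udisc \<longrightarrow> h z = 0) \<and>
      (\<exists>\<phi>\<in>S. \<exists>F. finite F \<and> (\<forall>z\<in>udisc - F. h z = g z * \<phi> z))}"

end

theory Submission
  imports Defs "HOL-Complex_Analysis.Cauchy_Integral_Formula"
begin

text \<open>A holomorphic function on the disc vanishing at the distinct points \<open>p\<^sub>j\<close> is the Blaschke
  product \<open>B\<^sub>p\<close> times a holomorphic function \<open>g\<close>, and conversely every \<open>B\<^sub>p g\<close> vanishes there. A finite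
  Blaschke product is bounded above and away from zero near the unit circle, so \<open>B\<^sub>p g\<close> and
  \<open>B\<^sub>q g\<close> dominate each other there, while on a compact subdisc both are bounded; hence one is
  square integrable against \<open>\<omega>\<close> iff the other is. Only positivity and integrability of the
  weight enter.\<close>

lemma blaschke_Nil [simp]: "blaschke [] z = 1"
  by (simp add: blaschke_def)

lemma blaschke_Cons [simp]:
  "blaschke (a # ps) z = (z - a) / (1 - cnj a * z) * blaschke ps z"
  by (simp add: blaschke_def)

lemma cnj_mult_neq_1:
  assumes "norm a < 1" "norm z < 1"
  shows "cnj a * z \<noteq> 1"
proof
  assume "cnj a * z = 1"
  then have "norm (cnj a * z) = 1"
    by simp
  moreover have "norm a * norm z < 1"
    using assms by (metis less_eq_real_def mult_left_le norm_ge_zero order_le_less_trans)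
  ultimately show False
    by (simp add: norm_mult)
qed

lemma blaschke_holomorphic: "set ps \<subseteq> udisc \<Longrightarrow> blaschke ps holomorphic_on udisc"
proof (induction ps)
  case Nil
  then show ?case
    by (simp add: blaschke_def)
next
  case (Cons a ps)
  then have "(\<lambda>z. (z - a) / (1 - cnj a * z) * blaschke ps z) holomorphic_on udisc"
    by (auto intro!: holomorphic_intros simp: cnj_mult_neq_1)
  then show ?case
    by simp
qed

lemma blaschke_eq_0_iff:
  assumes "set ps \<subseteq> udisc" "z \<in> udisc"
  shows "blaschke ps z = 0 \<longleftrightarrow> z \<in> set ps"
  using assms(1)
proof (induction ps)
  case (Cons a ps)
  have "cnj a * z \<noteq> 1"
    using Cons.prems assms(2) by (intro cnj_mult_neq_1) auto
  with Cons show ?case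
    by auto
qed simp

lemma holomorphic_factor_blaschke:
  assumes "f holomorphic_on S" "open S" "S \<subseteq> udisc"
    and "distinct ps" "set ps \<subseteq> S" "\<And>p. p \<in> set ps \<Longrightarrow> f p = 0"
  shows "\<exists>g. g holomorphic_on S \<and> (\<forall>z\<in>S. f z = blaschke ps z * g z)"
  using assms(1,4-6)
proof (induction ps arbitrary: f)
  case Nil
  then show ?case by auto
next
  case (Cons a ps)
  define g where "g z = (if z = a then deriv f a else (f z - f a) / (z - a))" for z
  have "a \<in> interior S"
    using Cons.prems assms(2) by (simp add: interior_open)
  then have "g holomorphic_on S"
    unfolding g_def[abs_def] by (rule pole_lemma[OF Cons.prems(1)])
  then have "(\<lambda>z. (1 - cnj a * z) * g z) holomorphic_on S"
    by (intro holomorphic_intros)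
  moreover have fa: "f a = 0"
    using Cons.prems by simp
  moreover have "(1 - cnj a * p) * g p = 0" if "p \<in> set ps" for p
    using that Cons.prems by (auto simp: g_def fa)
  ultimately have "\<exists>h. h holomorphic_on S \<and> (\<forall>z\<in>S. (1 - cnj a * z) * g z = blaschke ps z * h z)"
    using Cons.prems(2,3) by (intro Cons.IH) auto
  then obtain h where h: "h holomorphic_on S"
    and gh: "\<And>z. z \<in> S \<Longrightarrow> (1 - cnj a * z) * g z = blaschke ps z * h z"
    by blast
  have "f z = blaschke (a # ps) z * h z" if "z \<in> S" for z
  proof -
    have "cnj a * z \<noteq> 1"
      using that assms(3) Cons.prems(3) by (intro cnj_mult_neq_1) auto
    moreover have "f z = (z - a) * g z"
      by (cases "z = a") (auto simp: g_def fa)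
    ultimately have "f z = (z - a) / (1 - cnj a * z) * ((1 - cnj a * z) * g z)"
      by simp
    also have "\<dots> = blaschke (a # ps) z * h z"
      unfolding gh[OF that] by simp
    finally show ?thesis .
  qed
  with h show ?case by blast
qed

lemma continuous_on_eq_off_finite:
  fixes f g :: "'a::{perfect_space, t2_space} \<Rightarrow> 'b::t2_space"
  assumes f: "continuous_on S f" and g: "continuous_on S g" and "open S" "finite G"
    and eq: "\<And>y. y \<in> S - G \<Longrightarrow> f y = g y" and "x \<in> S"
  shows "f x = g x"
proof -
  have "isCont f x" "isCont g x"
    using f g \<open>open S\<close> \<open>x \<in> S\<close> by (simp_all add: continuous_on_eq_continuous_at)
  then have lim_f: "(f \<longlongrightarrow> f x) (at x)" and lim_g: "(g \<longlongrightarrow> g x) (at x)"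
    by (simp_all add: isCont_def)
  have "eventually (\<lambda>y. y \<in> S) (at x)"
    using \<open>open S\<close> \<open>x \<in> S\<close> by (rule eventually_at_in_open')
  moreover have "eventually (\<lambda>y. y \<notin> G) (at x)"
    using islimpt_finite[OF \<open>finite G\<close>, of x] by (simp add: islimpt_iff_eventually)
  ultimately have "eventually (\<lambda>y. f y = g y) (at x)"
    by eventually_elim (simp add: eq)
  then have "(g \<longlongrightarrow> f x) (at x)"
    using lim_f by (rule Lim_transform_eventually[rotated])
  with lim_g show ?thesis
    using tendsto_unique[OF at_neq_bot] by metis
qed

lemma blaschke_factor_norm_bounds:
  fixes a z :: complex
  assumes "norm a < 1" "(1 + norm a) / 2 \<le> norm z" "norm z < 1"
  shows "(1 - norm a) / 4 \<le> norm ((z - a) / (1 - cnj a * z))"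
    and "norm ((z - a) / (1 - cnj a * z)) \<le> 2 / (1 - norm a)"
proof -
  have "(1 - norm a) / 2 = (1 + norm a) / 2 - norm a"
    by (simp add: field_simps)
  then have num_lower: "(1 - norm a) / 2 \<le> norm (z - a)"
    using assms norm_triangle_ineq2[of z a] by linarith
  have num_upper: "norm (z - a) \<le> 2"
    using assms norm_triangle_ineq4[of z a] by linarith
  have "norm a * norm z \<le> norm a"
    using assms by (intro mult_left_le) auto
  then have den_upper: "norm (1 - cnj a * z) \<le> 2"
    and den_lower: "1 - norm a \<le> norm (1 - cnj a * z)"
    using assms norm_triangle_ineq4[of 1 "cnj a * z"] norm_triangle_ineq2[of 1 "cnj a * z"]
    by (simp_all add: norm_mult)
  have "(1 - norm a) / 4 = ((1 - norm a) / 2) / 2"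
    by simp
  also have "\<dots> \<le> norm (z - a) / norm (1 - cnj a * z)"
    using num_lower den_upper den_lower assms(1) by (intro frac_le) auto
  finally show "(1 - norm a) / 4 \<le> norm ((z - a) / (1 - cnj a * z))"
    by (simp add: norm_divide)
  have "norm (z - a) / norm (1 - cnj a * z) \<le> 2 / (1 - norm a)"
    using num_upper den_lower assms(1) by (intro frac_le) auto
  then show "norm ((z - a) / (1 - cnj a * z)) \<le> 2 / (1 - norm a)"
    by (simp add: norm_divide)
qed

lemma blaschke_norm_bounds_near_circle:
  assumes "set ps \<subseteq> udisc"
  shows "\<exists>r<1. \<exists>c>0. \<exists>C. \<forall>z. r \<le> norm z \<longrightarrow> norm z < 1 \<longrightarrow>
           c \<le> norm (blaschke ps z) \<and> norm (blaschke ps z) \<le> C"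
  using assms
proof (induction ps)
  case Nil
  have "\<forall>z. 0 \<le> norm z \<longrightarrow> norm z < 1 \<longrightarrow>
          1 \<le> norm (blaschke [] z) \<and> norm (blaschke [] z) \<le> 1"
    by simp
  then show ?case
    by (meson zero_less_one)
next
  case (Cons a ps)
  then obtain r c C where "r < 1" "c > 0"
    and bounds: "\<And>z. r \<le> norm z \<Longrightarrow> norm z < 1 \<Longrightarrow>
                   c \<le> norm (blaschke ps z) \<and> norm (blaschke ps z) \<le> C"
    by auto
  have a: "norm a < 1"
    using Cons.prems by simp
  define r' where "r' = max r ((1 + norm a) / 2)"
  have "c * ((1 - norm a) / 4) \<le> norm (blaschke (a # ps) z)
        \<and> norm (blaschke (a # ps) z) \<le> C * (2 / (1 - norm a))"
    if z: "r' \<le> norm z" "norm z < 1" for z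
  proof -
    have factor: "(1 - norm a) / 4 \<le> norm ((z - a) / (1 - cnj a * z))"
      "norm ((z - a) / (1 - cnj a * z)) \<le> 2 / (1 - norm a)"
      using a z by (intro blaschke_factor_norm_bounds; simp add: r'_def)+
    have rest: "c \<le> norm (blaschke ps z)" "norm (blaschke ps z) \<le> C"
      using bounds z by (auto simp: r'_def)
    have "c * ((1 - norm a) / 4) \<le> norm (blaschke ps z) * norm ((z - a) / (1 - cnj a * z))"
      by (rule mult_mono) (use factor rest \<open>c > 0\<close> a in auto)
    moreover have "norm (blaschke ps z) * norm ((z - a) / (1 - cnj a * z)) \<le> C * (2 / (1 - norm a))"
      by (rule mult_mono) (use factor rest \<open>c > 0\<close> in auto)
    moreover have "norm (blaschke (a # ps) z) = norm (blaschke ps z) * norm ((z - a) / (1 - cnj a * z))"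
      by (simp only: blaschke_Cons norm_mult mult.commute)
    ultimately show ?thesis
      by linarith
  qed
  moreover have "r' < 1" "c * ((1 - norm a) / 4) > 0"
    using \<open>r < 1\<close> \<open>c > 0\<close> a by (simp_all add: r'_def)
  ultimately show ?case
    by blast
qed

lemma borel_measurable_continuous_on_vanishing_outside:
  fixes h :: "'a::euclidean_space \<Rightarrow> 'b::euclidean_space"
  assumes "S \<in> sets borel" "continuous_on S h" "\<And>x. x \<notin> S \<Longrightarrow> h x = 0"
  shows "h \<in> borel_measurable lebesgue"
proof -
  have "(\<lambda>x. indicator S x *\<^sub>R h x) = h"
    using assms(3) by (auto simp: indicator_def)
  moreover have "(\<lambda>x. indicator S x *\<^sub>R h x) \<in> borel_measurable borel"
    using assms(1,2) by (rule borel_measurable_continuous_on_indicator)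
  ultimately show ?thesis
    by (metis measurable_lborel2 measurable_completion)
qed

lemma wL2_if_dominated_near_circle:
  assumes \<omega>_nonneg: "\<forall>z\<in>udisc. 0 \<le> \<omega> z"
    and \<omega>_int: "set_integrable lebesgue udisc \<omega>"
    and \<phi>: "wL2 \<omega> \<phi>"
    and h_cont: "continuous_on udisc h" and h_outside: "\<And>z. z \<notin> udisc \<Longrightarrow> h z = 0"
    and "r < 1" and dom: "\<And>z. r \<le> norm z \<Longrightarrow> norm z < 1 \<Longrightarrow> norm (h z) \<le> C * norm (\<phi> z)"
  shows "wL2 \<omega> h"
proof -
  have h_meas: "h \<in> borel_measurable lebesgue"
    using h_cont h_outside by (intro borel_measurable_continuous_on_vanishing_outside) auto
  define r0 where "r0 = max r 0"
  have "r0 < 1" "r \<le> r0"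
    using \<open>r < 1\<close> by (auto simp: r0_def)
  have "compact (h ` cball 0 r0)"
    using h_cont \<open>r0 < 1\<close> by (intro compact_continuous_image) (auto intro: continuous_on_subset)
  then obtain M where M: "\<And>z. z \<in> cball 0 r0 \<Longrightarrow> norm (h z) \<le> M"
    by (meson compact_imp_bounded bounded_iff image_eqI)
  have pointwise: "(norm (h z))\<^sup>2 * \<omega> z \<le> M\<^sup>2 * \<omega> z + C\<^sup>2 * ((norm (\<phi> z))\<^sup>2 * \<omega> z)"
    if z: "z \<in> udisc" for z
  proof (cases "norm z \<le> r0")
    case True
    then have "(norm (h z))\<^sup>2 \<le> M\<^sup>2"
      using M by (simp add: power_mono)
    then show ?thesis
      using \<omega>_nonneg z by (simp add: add_increasing2 mult_right_mono)
  next
    case False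
    then have "(norm (h z))\<^sup>2 \<le> (C * norm (\<phi> z))\<^sup>2"
      using dom z \<open>r \<le> r0\<close> by (simp add: power_mono)
    then have "(norm (h z))\<^sup>2 * \<omega> z \<le> C\<^sup>2 * ((norm (\<phi> z))\<^sup>2 * \<omega> z)"
      using \<omega>_nonneg z by (metis mult.assoc mult_right_mono power_mult_distrib)
    then show ?thesis
      using \<omega>_nonneg z by (simp add: add_increasing)
  qed
  have "set_integrable lebesgue udisc (\<lambda>z. M\<^sup>2 * \<omega> z + C\<^sup>2 * ((norm (\<phi> z))\<^sup>2 * \<omega> z))"
    using \<omega>_int \<phi> by (intro set_integral_add set_integrable_mult_right) (auto simp: wL2_def)
  moreover have "set_borel_measurable lebesgue udisc (\<lambda>z. (norm (h z))\<^sup>2 * \<omega> z)"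
  proof -
    have "(\<lambda>z. (norm (h z))\<^sup>2 * (indicator udisc z *\<^sub>R \<omega> z)) \<in> borel_measurable lebesgue"
      using h_meas \<omega>_int unfolding set_integrable_def by measurable
    then show ?thesis
      unfolding set_borel_measurable_def by (simp add: indicator_def mult_ac)
  qed
  moreover have "AE z in lebesgue. z \<in> udisc \<longrightarrow>
      norm ((norm (h z))\<^sup>2 * \<omega> z) \<le> norm (M\<^sup>2 * \<omega> z + C\<^sup>2 * ((norm (\<phi> z))\<^sup>2 * \<omega> z))"
    using pointwise \<omega>_nonneg by (intro AE_I2) (auto intro: order_trans[OF _ abs_ge_self])
  ultimately have "set_integrable lebesgue udisc (\<lambda>z. (norm (h z))\<^sup>2 * \<omega> z)"
    by (rule set_integrable_bound)
  with h_meas show ?thesis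
    by (simp add: wL2_def)
qed

definition blaschke_mult :: "complex list \<Rightarrow> (complex \<Rightarrow> complex) \<Rightarrow> complex \<Rightarrow> complex" where
  "blaschke_mult ps g z = (if z \<in> udisc then blaschke ps z * g z else 0)"

lemma blaschke_mult_outside: "z \<notin> udisc \<Longrightarrow> blaschke_mult ps g z = 0"
  by (simp add: blaschke_mult_def)

lemma blaschke_mult_holomorphic:
  assumes "set ps \<subseteq> udisc" "g holomorphic_on udisc"
  shows "blaschke_mult ps g holomorphic_on udisc"
proof -
  have "(\<lambda>z. blaschke ps z * g z) holomorphic_on udisc"
    using assms by (intro holomorphic_intros blaschke_holomorphic)
  then show ?thesis
    by (rule holomorphic_transform) (simp add: blaschke_mult_def)
qed

lemma wL2_blaschke_mult:
  assumes "\<forall>z\<in>udisc. 0 \<le> \<omega> z" "set_integrable lebesgue udisc \<omega>"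
    and ps: "set ps \<subseteq> udisc" and qs: "set qs \<subseteq> udisc" and g: "g holomorphic_on udisc"
    and "wL2 \<omega> (blaschke_mult qs g)"
  shows "wL2 \<omega> (blaschke_mult ps g)"
proof -
  obtain r1 C1 where "r1 < 1"
    and upper: "\<And>z. r1 \<le> norm z \<Longrightarrow> norm z < 1 \<Longrightarrow> norm (blaschke ps z) \<le> C1"
    using blaschke_norm_bounds_near_circle[OF ps] by blast
  obtain r2 c2 where "r2 < 1" "c2 > 0"
    and lower: "\<And>z. r2 \<le> norm z \<Longrightarrow> norm z < 1 \<Longrightarrow> c2 \<le> norm (blaschke qs z)"
    using blaschke_norm_bounds_near_circle[OF qs] by blast
  have dom: "norm (blaschke_mult ps g z) \<le> C1 / c2 * norm (blaschke_mult qs g z)"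
    if z: "max r1 r2 \<le> norm z" "norm z < 1" for z
  proof -
    have "norm (blaschke ps z) * norm (g z) \<le> C1 * norm (g z)"
      using upper z by (simp add: mult_right_mono)
    also have "\<dots> = C1 / c2 * (c2 * norm (g z))"
      using \<open>c2 > 0\<close> by simp
    also have "\<dots> \<le> C1 / c2 * (norm (blaschke qs z) * norm (g z))"
    proof (intro mult_left_mono mult_right_mono)
      show "c2 \<le> norm (blaschke qs z)"
        using lower z by simp
      show "0 \<le> C1 / c2"
        using upper[of z] z \<open>c2 > 0\<close> by (meson max.boundedE norm_ge_zero order_trans divide_nonneg_pos)
    qed simp
    finally show ?thesis
      using z by (simp add: blaschke_mult_def norm_mult)
  qed
  have cont: "continuous_on udisc (blaschke_mult ps g)"
    using blaschke_mult_holomorphic[OF ps g] by (rule holomorphic_on_imp_continuous_on)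
  have r: "max r1 r2 < 1"
    using \<open>r1 < 1\<close> \<open>r2 < 1\<close> by simp
  show ?thesis
    by (rule wL2_if_dominated_near_circle[OF assms(1,2,6) cont blaschke_mult_outside r dom])
qed

lemma bergman_zeros_imp_blaschke_mult:
  assumes "f \<in> bergman_zeros \<omega> ps" "distinct ps" "set ps \<subseteq> udisc"
  obtains g where "g holomorphic_on udisc" "f = blaschke_mult ps g"
proof -
  have f: "f holomorphic_on udisc" "\<And>p. p \<in> set ps \<Longrightarrow> f p = 0"
    and f_outside: "\<And>z. z \<notin> udisc \<Longrightarrow> f z = 0"
    using assms(1) by (auto simp: bergman_zeros_def bergman_def)
  obtain g where g: "g holomorphic_on udisc" and fg: "\<forall>z\<in>udisc. f z = blaschke ps z * g z"
    using holomorphic_factor_blaschke[OF f(1) open_ball order.refl assms(2,3) f(2)] by blast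
  have "f = blaschke_mult ps g"
    using fg f_outside by (auto simp: blaschke_mult_def fun_eq_iff)
  with g show ?thesis
    by (rule that)
qed

lemma blaschke_mult_in_bergman_zeros:
  assumes "set ps \<subseteq> udisc" "g holomorphic_on udisc" "wL2 \<omega> (blaschke_mult ps g)"
  shows "blaschke_mult ps g \<in> bergman_zeros \<omega> ps"
proof -
  have "blaschke_mult ps g p = 0" if "p \<in> set ps" for p
    using that assms(1) blaschke_eq_0_iff[OF assms(1)] by (auto simp: blaschke_mult_def)
  then show ?thesis
    using blaschke_mult_holomorphic[OF assms(1,2)] assms(3) blaschke_mult_outside
    by (simp add: bergman_zeros_def bergman_def)
qed

lemma bergman_zeros_subset_fun_times:
  assumes "\<forall>z\<in>udisc. 0 \<le> \<omega> z" "set_integrable lebesgue udisc \<omega>"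
    and ps: "distinct ps" "set ps \<subseteq> udisc" and qs: "set qs \<subseteq> udisc"
  shows "bergman_zeros \<omega> ps \<subseteq> fun_times (\<lambda>z. blaschke ps z / blaschke qs z) (bergman_zeros \<omega> qs)"
proof
  fix f assume f: "f \<in> bergman_zeros \<omega> ps"
  then obtain g where g: "g holomorphic_on udisc" and f_eq: "f = blaschke_mult ps g"
    using ps by (blast elim: bergman_zeros_imp_blaschke_mult)
  have "wL2 \<omega> f"
    using f by (simp add: bergman_zeros_def bergman_def)
  then have "wL2 \<omega> (blaschke_mult qs g)"
    unfolding f_eq by (rule wL2_blaschke_mult[OF assms(1,2) qs ps(2) g])
  then have \<phi>: "blaschke_mult qs g \<in> bergman_zeros \<omega> qs"
    by (rule blaschke_mult_in_bergman_zeros[OF qs g])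
  have "\<forall>z\<in>udisc - set qs. f z = blaschke ps z / blaschke qs z * blaschke_mult qs g z"
    using blaschke_eq_0_iff[OF qs] by (simp add: f_eq blaschke_mult_def)
  with f \<phi> show "f \<in> fun_times (\<lambda>z. blaschke ps z / blaschke qs z) (bergman_zeros \<omega> qs)"
    unfolding fun_times_def bergman_zeros_def bergman_def by blast
qed

lemma fun_times_subset_bergman_zeros:
  assumes "\<forall>z\<in>udisc. 0 \<le> \<omega> z" "set_integrable lebesgue udisc \<omega>"
    and ps: "set ps \<subseteq> udisc" and qs: "distinct qs" "set qs \<subseteq> udisc"
  shows "fun_times (\<lambda>z. blaschke ps z / blaschke qs z) (bergman_zeros \<omega> qs) \<subseteq> bergman_zeros \<omega> ps"
proof
  fix h assume "h \<in> fun_times (\<lambda>z. blaschke ps z / blaschke qs z) (bergman_zeros \<omega> qs)"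
  then obtain \<phi> F where h: "h holomorphic_on udisc" "\<And>z. z \<notin> udisc \<Longrightarrow> h z = 0"
    and \<phi>: "\<phi> \<in> bergman_zeros \<omega> qs" and "finite F"
    and h_eq: "\<And>z. z \<in> udisc - F \<Longrightarrow> h z = blaschke ps z / blaschke qs z * \<phi> z"
    unfolding fun_times_def by blast
  obtain g where g: "g holomorphic_on udisc" and \<phi>_eq: "\<phi> = blaschke_mult qs g"
    using \<phi> qs by (blast elim: bergman_zeros_imp_blaschke_mult)
  have "h z = blaschke_mult ps g z" for z
  proof (cases "z \<in> udisc")
    case True
    show ?thesis
    proof (rule continuous_on_eq_off_finite[OF _ _ open_ball _ _ True])
      show "continuous_on udisc h"
        using h(1) by (rule holomorphic_on_imp_continuous_on)
      show "continuous_on udisc (blaschke_mult ps g)"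
        using blaschke_mult_holomorphic[OF ps g] by (rule holomorphic_on_imp_continuous_on)
      show "finite (F \<union> set qs)"
        using \<open>finite F\<close> by simp
      show "h y = blaschke_mult ps g y" if "y \<in> udisc - (F \<union> set qs)" for y
        using that h_eq[of y] blaschke_eq_0_iff[OF qs(2), of y] by (simp add: \<phi>_eq blaschke_mult_def)
    qed
  qed (simp add: h(2) blaschke_mult_outside)
  then have h_eq': "h = blaschke_mult ps g"
    by blast
  have "wL2 \<omega> (blaschke_mult qs g)"
    using \<phi> by (simp add: \<phi>_eq bergman_zeros_def bergman_def)
  then have "wL2 \<omega> h"
    unfolding h_eq' by (rule wL2_blaschke_mult[OF assms(1,2) ps qs(2) g])
  then show "h \<in> bergman_zeros \<omega> ps"
    unfolding h_eq' by (rule blaschke_mult_in_bergman_zeros[OF ps g])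
qed

theorem proposition1p12:
  fixes \<omega> :: "complex \<Rightarrow> real" and ps qs :: "complex list"
  assumes "bergman_weight \<omega>"
    and "distinct ps" and "set ps \<subseteq> udisc"
    and "distinct qs" and "set qs \<subseteq> udisc"
  shows "bergman_zeros \<omega> ps =
           fun_times (\<lambda>z. blaschke ps z / blaschke qs z) (bergman_zeros \<omega> qs)
      \<and> bergman_zeros \<omega> ps = fun_times (blaschke ps) (bergman \<omega>)"
proof -
  have weight: "\<forall>z\<in>udisc. 0 \<le> \<omega> z" "set_integrable lebesgue udisc \<omega>"
    using assms(1) by (auto simp: bergman_weight_def less_imp_le)
  have quotient: "bergman_zeros \<omega> ps =
      fun_times (\<lambda>z. blaschke ps z / blaschke qs' z) (bergman_zeros \<omega> qs')"
    if "distinct qs'" "set qs' \<subseteq> udisc" for qs'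
    using bergman_zeros_subset_fun_times[OF weight assms(2,3) that(2)]
      fun_times_subset_bergman_zeros[OF weight assms(3) that] by (rule subset_antisym)
  have "bergman_zeros \<omega> [] = bergman \<omega>"
    by (simp add: bergman_zeros_def)
  moreover have "(\<lambda>z. blaschke ps z / blaschke [] z) = blaschke ps"
    by simp
  ultimately show ?thesis
    using quotient[of qs] quotient[of "[]"] assms(4,5) by simp
qed

end
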